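(* Let $0<\lambda<1$ and let $I_1\subset\mathbb{R}$ be an open interval containing $[-1,1]$. For every integer $n\ge1$ there exists $\delta(n)>0$ with $(n+1)\delta(n)<1-\lambda$ such that for every $C^1$ map $h:I_1\to\mathbb{R}$ with $\|h-\mathrm{id}\|_{1,I_1}<\delta(n)$ and $h(0)>0$ there exists an integer $k\ge1$ satisfying $$(n+1)|h(\lambda^k)-\lambda^k|>\lambda^k(1-\lambda),\qquad n|h(\lambda^k)-\lambda^k|<\lambda^{k-1}(1-\lambda),$$ and $$|(h(y)-y)-(h(\lambda^k)-\lambda^k)|<\tfrac14|h(\lambda^k)-\lambda^k|\quad\text{for every } y\in I_1 \text{ with } |y-\lambda^k|<\lambda^{k-1}(1-\lambda).$$
   Context: For an open set $J\subset\mathbb{R}$ and a $C^1$ map $u$ on $J$, $\|u\|_{1,J}=\sup_{x\in J}(|u(x)|+|u'(x)|)$. *)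

theory Defs
  imports "HOL-Analysis.Analysis"
begin

definition C1_on :: "real set \<Rightarrow> (real \<Rightarrow> real) \<Rightarrow> (real \<Rightarrow> real) \<Rightarrow> bool" where
  "C1_on J u u' \<longleftrightarrow> (\<forall>x\<in>J. (u has_real_derivative u' x) (at x)) \<and> continuous_on J u'"

text \<open>The C^1 norm sup over J of |u x| + |u' x|, where u' is the derivative of u;
  it is finite iff the set of values is bounded above.\<close>
definition C1_norm :: "real set \<Rightarrow> (real \<Rightarrow> real) \<Rightarrow> (real \<Rightarrow> real) \<Rightarrow> real" where
  "C1_norm J u u' = (SUP x\<in>J. \<bar>u x\<bar> + \<bar>u' x\<bar>)"

definition C1_norm_less :: "real set \<Rightarrow> (real \<Rightarrow> real) \<Rightarrow> (real \<Rightarrow> real) \<Rightarrow> real \<Rightarrow> bool" where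
  "C1_norm_less J u u' d \<longleftrightarrow>
     bdd_above ((\<lambda>x. \<bar>u x\<bar> + \<bar>u' x\<bar>) ` J) \<and> C1_norm J u u' < d"

end

theory Submission
  imports Defs
begin

(*
  Write g = h - id for the displacement of h.  The hypothesis on h says that
  |g| < \<delta> on I1 and |g'| \<le> \<delta>, so g is \<delta>-Lipschitz on the interval I1, while
  g(0) = h(0) > 0.  Call the scale k "detected" if (n+1)|g(\<lambda>^k)| > \<lambda>^k(1-\<lambda>).
  Since \<lambda>^k \<rightarrow> 0 and g(\<lambda>^k) stays close to g(0) > 0, some scale k \<ge> 1 is
  detected; we take the least one.  Minimality (or |g| < \<delta> when k = 1)
  bounds n|g(\<lambda>^k)| from above, and the Lipschitz bound shows g varies by
  less than |g(\<lambda>^k)|/4 on the window |y - \<lambda>^k| < \<lambda>^(k-1)(1-\<lambda>), provided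
  \<delta> is small compared with \<lambda>(1-\<lambda>)/(n+1)^2.
*)

lemma C1_norm_less_pointwise:
  assumes "C1_norm_less J u u' d" and "x \<in> J"
  shows "\<bar>u x\<bar> + \<bar>u' x\<bar> < d"
proof -
  have "\<bar>u x\<bar> + \<bar>u' x\<bar> \<le> C1_norm J u u'"
    using assms unfolding C1_norm_less_def C1_norm_def by (auto intro: cSUP_upper)
  with assms(1) show ?thesis unfolding C1_norm_less_def by linarith
qed

lemma C1_close_to_id_displacement:
  assumes C1: "C1_on I h h'" and close: "C1_norm_less I (\<lambda>x. h x - x) (\<lambda>x. h' x - 1) d"
    and iv: "is_interval I"
  shows "\<And>x. x \<in> I \<Longrightarrow> \<bar>h x - x\<bar> < d"
    and "\<And>a b. a \<in> I \<Longrightarrow> b \<in> I \<Longrightarrow> \<bar>(h b - b) - (h a - a)\<bar> \<le> d * \<bar>b - a\<bar>"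
proof -
  note pointwise = C1_norm_less_pointwise[OF close]
  show "\<bar>h x - x\<bar> < d" if "x \<in> I" for x
    using pointwise[OF that] abs_ge_zero[of "h' x - 1"] by linarith
  have "((\<lambda>x. h x - x) has_field_derivative h' x - 1) (at x)" if "x \<in> I" for x
    using C1 that unfolding C1_on_def by (auto intro!: derivative_eq_intros)
  hence deriv: "((\<lambda>x. h x - x) has_field_derivative h' x - 1) (at x within I)" if "x \<in> I" for x
    using that by (blast intro: has_field_derivative_at_within)
  have slope: "norm (h' x - 1) \<le> d" if "x \<in> I" for x
    using pointwise[OF that] by simp
  show "\<bar>(h b - b) - (h a - a)\<bar> \<le> d * \<bar>b - a\<bar>" if "a \<in> I" "b \<in> I" for a b
    using field_differentiable_bound[OF is_interval_convex[OF iv] deriv slope that(2,1)]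
    by simp
qed

text \<open>First: since g(\<lambda>^k) \<rightarrow> g(0) > 0, some scale k \<ge> 1 is detected.\<close>
lemma detected_scale_exists:
  fixes g :: "real \<Rightarrow> real" and lam N d :: real
  assumes lam: "0 < lam" "lam < 1" and N: "N \<ge> 0" and I: "{0..1} \<subseteq> I"
    and g0: "g 0 > 0" and d: "d > 0" "(N + 1) * d < 1 - lam"
    and lip: "\<And>a b. a \<in> I \<Longrightarrow> b \<in> I \<Longrightarrow> \<bar>g b - g a\<bar> \<le> d * \<bar>b - a\<bar>"
  shows "\<exists>k\<ge>1. (N + 1) * \<bar>g (lam ^ k)\<bar> > lam ^ k * (1 - lam)"
proof -
  obtain m where m: "lam ^ m < g 0 / 2"
    using real_arch_pow_inv[of "g 0 / 2" lam] g0 lam by auto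
  define x where "x = lam ^ Suc m"
  have "x \<le> lam ^ m" "lam ^ m \<le> 1"
    using lam by (simp_all add: x_def mult_left_le_one_le power_le_one)
  moreover have "0 < x" using lam by (simp add: x_def)
  ultimately have x: "0 < x" "x \<le> 1" "x < g 0 / 2"
    using m by linarith+
  have "\<bar>g x - g 0\<bar> \<le> d * x"
    using lip[of 0 x] x I by (simp add: subset_iff)
  hence "(N + 1) * \<bar>g x\<bar> \<ge> (N + 1) * (g 0 - d * x)"
    using N by (intro mult_left_mono) auto
  moreover have "(N + 1) * (g 0 - d * x) \<ge> g 0 - ((N + 1) * d) * x"
    using N g0 by (simp add: algebra_simps)
  moreover have "((N + 1) * d) * x < x * (1 - lam)"
    using mult_strict_right_mono[OF d(2) x(1)] by (simp add: mult.commute)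
  moreover have "x * (1 - lam) \<le> x"
    using x lam by (simp add: algebra_simps)
  ultimately have "(N + 1) * \<bar>g x\<bar> > x * (1 - lam)"
    using x by linarith
  thus ?thesis unfolding x_def by (intro exI[of _ "Suc m"]) auto
qed

text \<open>The least detected scale is not too coarse: either k = 1 and |g| < d
  gives the bound directly, or the scale k - 1 was not detected and g moved
  by at most d \<lambda>^(k-1)(1-\<lambda>) between the two scales.\<close>
lemma least_detected_scale_upper_bound:
  fixes g :: "real \<Rightarrow> real" and lam N d :: real
  assumes lam: "0 < lam" "lam < 1" and N: "N \<ge> 0" and I: "{0..1} \<subseteq> I"
    and d: "(N + 1) * d < 1 - lam" "N * (N + 1) * d < 1"
    and bound: "\<And>x. x \<in> I \<Longrightarrow> \<bar>g x\<bar> < d"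
    and lip: "\<And>a b. a \<in> I \<Longrightarrow> b \<in> I \<Longrightarrow> \<bar>g b - g a\<bar> \<le> d * \<bar>b - a\<bar>"
    and k: "k \<ge> 1"
    and undetected: "k \<ge> 2 \<Longrightarrow> (N + 1) * \<bar>g (lam ^ (k - 1))\<bar> \<le> lam ^ (k - 1) * (1 - lam)"
  shows "N * \<bar>g (lam ^ k)\<bar> < lam ^ (k - 1) * (1 - lam)"
proof -
  have pow_in_I: "lam ^ j \<in> I" for j
    using I lam by (auto simp: power_le_one)
  define B where "B = \<bar>g (lam ^ k)\<bar>"
  define L where "L = lam ^ (k - 1) * (1 - lam)"
  have L: "L > 0" using lam by (simp add: L_def)
  show ?thesis
  proof (cases "k = 1")
    case True
    have "N * B \<le> (N + 1) * B" by (simp add: B_def algebra_simps)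
    also have "\<dots> \<le> (N + 1) * d"
      using bound[OF pow_in_I] N by (intro mult_left_mono) (auto simp: B_def less_imp_le)
    finally show ?thesis using d(1) True by (simp add: B_def)
  next
    case False
    define A where "A = \<bar>g (lam ^ (k - 1))\<bar>"
    have A: "(N + 1) * A \<le> L"
      using undetected False k by (simp add: A_def L_def)
    have gap: "\<bar>lam ^ k - lam ^ (k - 1)\<bar> = L"
      using k lam by (cases k) (auto simp: L_def abs_if algebra_simps)
    have "\<bar>g (lam ^ k) - g (lam ^ (k - 1))\<bar> \<le> d * L"
      using lip[OF pow_in_I pow_in_I] gap by metis
    hence "B \<le> A + d * L"
      using abs_triangle_ineq2[of "g (lam ^ k)" "g (lam ^ (k - 1))"] by (simp add: A_def B_def)
    hence "(N + 1) * B \<le> L + (N + 1) * d * L"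
      using A N mult_left_mono[of B "A + d * L" "N + 1"] by (simp add: algebra_simps)
    hence "N * ((N + 1) * B) \<le> N * (L + (N + 1) * d * L)"
      using N by (rule mult_left_mono)
    hence "(N + 1) * (N * B) \<le> N * L + (N * (N + 1) * d) * L"
      by (simp add: algebra_simps)
    also have "\<dots> < N * L + 1 * L"
      using d(2) L by (intro add_strict_left_mono mult_strict_right_mono)
    also have "\<dots> = (N + 1) * L"
      by (simp add: algebra_simps)
    finally show ?thesis using N by (simp add: B_def L_def mult_less_cancel_left_pos)
  qed
qed

text \<open>At a detected scale, g is nearly constant on the window of radius
  \<lambda>^(k-1)(1-\<lambda>) around \<lambda>^k: it varies by at most d times the radius,
  which is less than a quarter of |g(\<lambda>^k)| once 4(N+1)d \<le> \<lambda>.\<close>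
lemma detected_scale_flat_window:
  fixes g :: "real \<Rightarrow> real" and lam N d :: real
  assumes lam: "0 < lam" "lam < 1" and N: "N \<ge> 0" and I: "{0..1} \<subseteq> I"
    and d: "d > 0" "4 * (N + 1) * d \<le> lam"
    and lip: "\<And>a b. a \<in> I \<Longrightarrow> b \<in> I \<Longrightarrow> \<bar>g b - g a\<bar> \<le> d * \<bar>b - a\<bar>"
    and k: "k \<ge> 1" and detected: "(N + 1) * \<bar>g (lam ^ k)\<bar> > lam ^ k * (1 - lam)"
    and y: "y \<in> I" "\<bar>y - lam ^ k\<bar> < lam ^ (k - 1) * (1 - lam)"
  shows "\<bar>g y - g (lam ^ k)\<bar> < \<bar>g (lam ^ k)\<bar> / 4"
proof -
  define L where "L = lam ^ (k - 1) * (1 - lam)"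
  have L: "L > 0" using lam by (simp add: L_def)
  have pow_k: "lam ^ k * (1 - lam) = lam * L"
    using k by (cases k) (auto simp: L_def)
  have "lam ^ k \<in> I"
    using I lam by (auto simp: power_le_one)
  hence "\<bar>g y - g (lam ^ k)\<bar> \<le> d * \<bar>y - lam ^ k\<bar>"
    using lip y(1) by blast
  also have "\<dots> < d * L" using y(2) d(1) by (simp add: L_def)
  finally have vary: "\<bar>g y - g (lam ^ k)\<bar> < d * L" .
  have "(N + 1) * (4 * (d * L)) \<le> lam * L"
    using d(2) L mult_right_mono[of "4 * (N + 1) * d" lam L] by (simp add: algebra_simps)
  hence "(N + 1) * (4 * (d * L)) < (N + 1) * \<bar>g (lam ^ k)\<bar>"
    using detected pow_k by simp
  hence "4 * (d * L) < \<bar>g (lam ^ k)\<bar>"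
    using N by (simp add: mult_less_cancel_left_pos)
  with vary show ?thesis by linarith
qed

lemma least_detected_scale:
  fixes g :: "real \<Rightarrow> real" and lam N d :: real
  assumes lam: "0 < lam" "lam < 1" and N: "N \<ge> 0" and I: "{0..1} \<subseteq> I"
    and g0: "g 0 > 0"
    and d: "d > 0" "(N + 1) * d < 1 - lam" "N * (N + 1) * d < 1" "4 * (N + 1) * d \<le> lam"
    and bound: "\<And>x. x \<in> I \<Longrightarrow> \<bar>g x\<bar> < d"
    and lip: "\<And>a b. a \<in> I \<Longrightarrow> b \<in> I \<Longrightarrow> \<bar>g b - g a\<bar> \<le> d * \<bar>b - a\<bar>"
  shows "\<exists>k\<ge>1. (N + 1) * \<bar>g (lam ^ k)\<bar> > lam ^ k * (1 - lam) \<and>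
           N * \<bar>g (lam ^ k)\<bar> < lam ^ (k - 1) * (1 - lam) \<and>
           (\<forall>y\<in>I. \<bar>y - lam ^ k\<bar> < lam ^ (k - 1) * (1 - lam) \<longrightarrow>
              \<bar>g y - g (lam ^ k)\<bar> < \<bar>g (lam ^ k)\<bar> / 4)"
proof -
  define detected where "detected j \<longleftrightarrow> 1 \<le> j \<and> (N + 1) * \<bar>g (lam ^ j)\<bar> > lam ^ j * (1 - lam)"
    for j :: nat
  obtain k where k: "detected k" and least: "\<And>j. j < k \<Longrightarrow> \<not> detected j"
    using detected_scale_exists[OF lam N I g0 d(1,2) lip] exists_least_iff[of detected]
    unfolding detected_def by blast
  have k1: "k \<ge> 1" and detected_k: "(N + 1) * \<bar>g (lam ^ k)\<bar> > lam ^ k * (1 - lam)"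
    using k by (auto simp: detected_def)
  have "(N + 1) * \<bar>g (lam ^ (k - 1))\<bar> \<le> lam ^ (k - 1) * (1 - lam)" if "k \<ge> 2"
    using least[of "k - 1"] that unfolding detected_def by auto
  hence "N * \<bar>g (lam ^ k)\<bar> < lam ^ (k - 1) * (1 - lam)"
    using least_detected_scale_upper_bound[OF lam N I d(2,3) bound lip k1] by blast
  with k1 detected_k show ?thesis
    using detected_scale_flat_window[OF lam N I d(1,4) lip k1 detected_k] by blast
qed

lemma threshold_conditions:
  fixes lam N :: real
  assumes lam: "0 < lam" "lam < 1" and N: "N \<ge> 0"
  defines "d \<equiv> lam * (1 - lam) / (8 * (N + 1)\<^sup>2)"
  shows "d > 0" "(N + 1) * d < 1 - lam" "N * (N + 1) * d < 1" "4 * (N + 1) * d \<le> lam"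
proof -
  have small: "lam * (1 - lam) < 1 - lam" and small': "lam * (1 - lam) \<le> lam"
    and nonneg: "0 \<le> lam * (1 - lam)"
    using lam by (simp_all add: mult_left_le_one_le)
  have scaled: "(N + 1) * d = lam * (1 - lam) / (8 * (N + 1))"
    using N by (simp add: d_def power2_eq_square)
  have bound: "(N + 1) * d \<le> lam * (1 - lam) / 8"
    unfolding scaled using N lam by (intro divide_left_mono) auto
  with small nonneg show "(N + 1) * d < 1 - lam" by linarith
  from bound small' nonneg have "4 * ((N + 1) * d) \<le> lam" by linarith
  thus "4 * (N + 1) * d \<le> lam" by (simp only: mult.assoc)
  show "d > 0" using lam N by (simp add: d_def)
  have "N * (N + 1) * d = N / (N + 1) * (lam * (1 - lam) / 8)"
    using N by (simp add: d_def power2_eq_square)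
  also have "\<dots> \<le> 1 * (lam * (1 - lam) / 8)"
    using N lam by (intro mult_right_mono) auto
  finally show "N * (N + 1) * d < 1" using small nonneg lam by linarith
qed

lemma uniform_scale_detection:
  fixes lam N :: real and I :: "real set"
  assumes lam: "0 < lam" "lam < 1" and N: "N \<ge> 0"
    and iv: "is_interval I" and I: "{0..1} \<subseteq> I"
  shows "\<exists>\<delta>>0. (N + 1) * \<delta> < 1 - lam \<and>
      (\<forall>h h'. C1_on I h h' \<longrightarrow>
         C1_norm_less I (\<lambda>x. h x - x) (\<lambda>x. h' x - 1) \<delta> \<longrightarrow> h 0 > 0 \<longrightarrow>
         (\<exists>k::nat. k \<ge> 1 \<and>
            (N + 1) * \<bar>h (lam ^ k) - lam ^ k\<bar> > lam ^ k * (1 - lam) \<and>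
            N * \<bar>h (lam ^ k) - lam ^ k\<bar> < lam ^ (k - 1) * (1 - lam) \<and>
            (\<forall>y\<in>I. \<bar>y - lam ^ k\<bar> < lam ^ (k - 1) * (1 - lam) \<longrightarrow>
               \<bar>(h y - y) - (h (lam ^ k) - lam ^ k)\<bar> < \<bar>h (lam ^ k) - lam ^ k\<bar> / 4)))"
proof -
  define d where "d = lam * (1 - lam) / (8 * (N + 1)\<^sup>2)"
  note d = threshold_conditions[OF lam N, folded d_def]
  have detect: "\<exists>k::nat. k \<ge> 1 \<and>
            (N + 1) * \<bar>h (lam ^ k) - lam ^ k\<bar> > lam ^ k * (1 - lam) \<and>
            N * \<bar>h (lam ^ k) - lam ^ k\<bar> < lam ^ (k - 1) * (1 - lam) \<and>
            (\<forall>y\<in>I. \<bar>y - lam ^ k\<bar> < lam ^ (k - 1) * (1 - lam) \<longrightarrow>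
               \<bar>(h y - y) - (h (lam ^ k) - lam ^ k)\<bar> < \<bar>h (lam ^ k) - lam ^ k\<bar> / 4)"
    if "C1_on I h h'" "C1_norm_less I (\<lambda>x. h x - x) (\<lambda>x. h' x - 1) d" "h 0 > 0" for h h'
    using least_detected_scale[of lam N I "\<lambda>x. h x - x" d,
        OF lam N I _ d C1_close_to_id_displacement[OF that(1,2) iv]] that(3)
    by simp
  show ?thesis
    using d(1,2) detect by blast
qed

theorem lemma3p12:
  fixes lam :: real and I1 :: "real set"
  assumes "0 < lam" "lam < 1"
    and "open I1" "is_interval I1" "{-1..1} \<subseteq> I1"
  shows "\<forall>n::nat. n \<ge> 1 \<longrightarrow>
    (\<exists>\<delta>>0. (real n + 1) * \<delta> < 1 - lam \<and>
      (\<forall>h h'. C1_on I1 h h' \<longrightarrow>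
         C1_norm_less I1 (\<lambda>x. h x - x) (\<lambda>x. h' x - 1) \<delta> \<longrightarrow> h 0 > 0 \<longrightarrow>
         (\<exists>k::nat. k \<ge> 1 \<and>
            (real n + 1) * \<bar>h (lam ^ k) - lam ^ k\<bar> > lam ^ k * (1 - lam) \<and>
            real n * \<bar>h (lam ^ k) - lam ^ k\<bar> < lam ^ (k - 1) * (1 - lam) \<and>
            (\<forall>y\<in>I1. \<bar>y - lam ^ k\<bar> < lam ^ (k - 1) * (1 - lam) \<longrightarrow>
               \<bar>(h y - y) - (h (lam ^ k) - lam ^ k)\<bar> < \<bar>h (lam ^ k) - lam ^ k\<bar> / 4))))"
proof -
  have "{0..1} \<subseteq> I1" using assms(5) by auto
  from uniform_scale_detection[OF assms(1,2) _ assms(4) this] show ?thesis by simp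
qed

end
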